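(* Let $\alpha,\beta\in\mathsf{Lab}\uplus\underline{\mathsf{Lab}}$ with $\mathsf{und}(\alpha)=(p_\alpha,Rd_\alpha,Wt_\alpha)$, $\mathsf{und}(\beta)=(p_\beta,Rd_\beta,Wt_\beta)$, $Wt_\alpha\subseteq Rd_\alpha$, $Wt_\beta\subseteq Rd_\beta$ and $\alpha\;\iota_{lab}\;\beta$. Suppose $A\to_{ann}^{\alpha}A'$ and $A\to_{ann}^{\beta}A''$. Then $A''\to_{ann}^{\alpha}A'''$ where $A'''=A''\odot^{\alpha}\mathsf{diff}(A\to_{ann}^{\alpha}A')$.
   Context: Fix a set $\mathcal{R}$ of memory resources. Let $\mathsf{PID}=(\mathbb{N}_+)^*$ be the set of finite words over the positive integers, with $\preceq$ the prefix order. An annotation DAG is a triple $A=(V,E_R,E_W)$ such that: (1) $V\subseteq(\mathsf{PID}\times\mathbb{N})\cup\{\bot\}$ is finite, $\bot\in V$, and $(p,n)\in V$ implies $(p,n')\in V$ for all $n'\le n$; (2) $E_R,E_W\subseteq V\times\mathcal{R}\times V$, and $(v',r,v),(v'',r,v)\in E_R\cup E_W$ implies $v'=v''$; (3) $E_R\cap E_W=\varnothing$ and the directed graph $(V,E_R\cup E_W)$ is acyclic; (4) if $(v',r,v)\in E_W$ and $v'\neq\bot$ then $(v'',r,v')\in E_W$ for some $v''$; (5) $(v,r,v'),(v,r,v'')\in E_W$ implies $v'=v''$. For $r\in\mathcal{R}$, $\mathsf{last}(r,E_W)$ is $\bot$ if $E_W$ has no edge labelled $r$, and otherwise is the final node of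 the unique path from $\bot$ consisting of all $E_W$-edges labelled $r$. For $p\in\mathsf{PID}$, $\mathsf{max}_p(V)=\max\{n:(p,n)\in V\}$, or $-1$ if there is no such $n$. Let $\mathsf{Lab}=\mathsf{PID}\times2^{\mathcal{R}}\times2^{\mathcal{R}}$ and $\underline{\mathsf{Lab}}=\{\underline{a}:a\in\mathsf{Lab}\}$ a disjoint copy; $\mathsf{und}(a)=\mathsf{und}(\underline a)=a$. For $a=(p,Rd,Wt)\in\mathsf{Lab}$ and annotation DAGs $A_1=(V_1,E_{R1},E_{W1})$, $A_2=(V_2,E_{R2},E_{W2})$, write $A_1\to_{ann}^{a}A_2$ iff, with $v=(p,\mathsf{max}_p(V_1)+1)$ and $\mathsf{newedge}(r,E_W,v)=(\mathsf{last}(r,E_W),r,v)$: $V_2=V_1\cup\{v\}$, $E_{R2}=E_{R1}\cup\{\mathsf{newedge}(r,E_{W1},v): r\in Rd\setminus Wt\}$, $E_{W2}=E_{W1}\cup\{\mathsf{newedge}(r,E_{W1},v): r\in Wt\}$; and write $A_2\to_{ann}^{\underline a}A_1$ iff $A_1\to_{ann}^{a}A_2$. For $\alpha,\beta\in\mathsf{Lab}\uplus\underline{\mathsf{Lab}}$ with $\mathsf{und}(\alpha)=(p_1,Rd_1,Wt_1)$, $\mathsf{und}(\beta)=(p_2,Rd_2,Wt_2)$, define $\alpha\;\iota_{lab}\;\beta$ iff $p_1\not\preceq p_2$, $p_2\not\preceq p_1$, $Rd_1\cap Wt_2=\varnothing$ and $Rd_2\cap Wt_1=\varnothing$. For $o:(V,E_R,E_W)\to_{ann}^{\alpha}(V',E'_R,E'_W)$,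 $\mathsf{diff}(o)=(V'\setminus V,E'_R\setminus E_R,E'_W\setminus E_W)$ if $\alpha\in\mathsf{Lab}$ and $\mathsf{diff}(o)=(V\setminus V',E_R\setminus E'_R,E_W\setminus E'_W)$ if $\alpha\in\underline{\mathsf{Lab}}$. Also $(V,E_R,E_W)\odot^{\alpha}(\Delta V,\Delta E_R,\Delta E_W)$ is $(V\cup\Delta V,E_R\cup\Delta E_R,E_W\cup\Delta E_W)$ if $\alpha\in\mathsf{Lab}$ and $(V\setminus\Delta V,E_R\setminus\Delta E_R,E_W\setminus\Delta E_W)$ if $\alpha\in\underline{\mathsf{Lab}}$. (In the paper, labels arise from basic blocks for which the set of written resources is contained in the set of read resources; this is recorded here as the hypothesis $Wt\subseteq Rd$.) *)

theory Defs
  imports Main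
begin

(* PID = words over positive integers; represented as nat lists, positivity
   is enforced inside ann_dag (every non-bottom node has a positive PID). *)
type_synonym pid = "nat list"

definition pid_ok :: "pid \<Rightarrow> bool" where
  "pid_ok p \<longleftrightarrow> (\<forall>x\<in>set p. 0 < x)"

(* nodes: None = bottom, Some (p,n) *)
type_synonym node = "(pid \<times> nat) option"
type_synonym 'r edges = "(node \<times> 'r \<times> node) set"
type_synonym 'r ann = "node set \<times> 'r edges \<times> 'r edges"

definition edge_graph :: "'r edges \<Rightarrow> (node \<times> node) set" where
  "edge_graph E = {(u, v). \<exists>r. (u, r, v) \<in> E}"

definition ann_dag :: "'r ann \<Rightarrow> bool" where
  "ann_dag A \<longleftrightarrow> (case A of (V, ER, EW) \<Rightarrow>
     finite V \<and> None \<in> V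
     \<and> (\<forall>p n. Some (p, n) \<in> V \<longrightarrow> pid_ok p)
     \<and> (\<forall>p n n'. Some (p, n) \<in> V \<longrightarrow> n' \<le> n \<longrightarrow> Some (p, n') \<in> V)
     \<and> ER \<subseteq> V \<times> UNIV \<times> V \<and> EW \<subseteq> V \<times> UNIV \<times> V
     \<and> (\<forall>v' v'' r v. (v', r, v) \<in> ER \<union> EW \<longrightarrow> (v'', r, v) \<in> ER \<union> EW \<longrightarrow> v' = v'')
     \<and> ER \<inter> EW = {}
     \<and> acyclic (edge_graph (ER \<union> EW))
     \<and> (\<forall>v' r v. (v', r, v) \<in> EW \<longrightarrow> v' \<noteq> None \<longrightarrow> (\<exists>v''. (v'', r, v') \<in> EW))
     \<and> (\<forall>v r v' v''. (v, r, v') \<in> EW \<longrightarrow> (v, r, v'') \<in> EW \<longrightarrow> v' = v''))"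

definition r_path :: "'r \<Rightarrow> 'r edges \<Rightarrow> node list \<Rightarrow> bool" where
  "r_path r EW vs \<longleftrightarrow> vs \<noteq> [] \<and> hd vs = None
     \<and> {(vs ! i, r, vs ! Suc i) | i. Suc i < length vs} = {e \<in> EW. fst (snd e) = r}"

definition last_w :: "'r \<Rightarrow> 'r edges \<Rightarrow> node" where
  "last_w r EW = (if \<not> (\<exists>u v. (u, r, v) \<in> EW) then None
                  else (THE v. \<exists>vs. r_path r EW vs \<and> last vs = v))"

definition max_p :: "pid \<Rightarrow> node set \<Rightarrow> int" where
  "max_p p V = (if \<exists>n. Some (p, n) \<in> V then int (Max {n. Some (p, n) \<in> V}) else -1)"

definition newedge :: "'r \<Rightarrow> 'r edges \<Rightarrow> node \<Rightarrow> node \<times> 'r \<times> node" where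
  "newedge r EW v = (last_w r EW, r, v)"

type_synonym 'r lab0 = "pid \<times> 'r set \<times> 'r set"

datatype 'r lab = Fwd "'r lab0" | Bwd "'r lab0"

fun und :: "'r lab \<Rightarrow> 'r lab0" where
  "und (Fwd a) = a"
| "und (Bwd a) = a"

definition ann_fwd :: "'r ann \<Rightarrow> 'r lab0 \<Rightarrow> 'r ann \<Rightarrow> bool" where
  "ann_fwd A1 a A2 \<longleftrightarrow> ann_dag A1 \<and> ann_dag A2 \<and>
     (case A1 of (V1, ER1, EW1) \<Rightarrow> case A2 of (V2, ER2, EW2) \<Rightarrow>
      case a of (p, Rd, Wt) \<Rightarrow>
        (let v = Some (p, nat (max_p p V1 + 1)) in
          V2 = V1 \<union> {v}
        \<and> ER2 = ER1 \<union> {newedge r EW1 v | r. r \<in> Rd - Wt}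
        \<and> EW2 = EW1 \<union> {newedge r EW1 v | r. r \<in> Wt}))"

fun ann_step :: "'r ann \<Rightarrow> 'r lab \<Rightarrow> 'r ann \<Rightarrow> bool" where
  "ann_step A1 (Fwd a) A2 = ann_fwd A1 a A2"
| "ann_step A2 (Bwd a) A1 = ann_fwd A1 a A2"

definition prefix_le :: "pid \<Rightarrow> pid \<Rightarrow> bool" where
  "prefix_le p q \<longleftrightarrow> (\<exists>s. q = p @ s)"

definition iota_lab :: "'r lab \<Rightarrow> 'r lab \<Rightarrow> bool" where
  "iota_lab \<alpha> \<beta> \<longleftrightarrow> (case und \<alpha> of (p1, Rd1, Wt1) \<Rightarrow> case und \<beta> of (p2, Rd2, Wt2) \<Rightarrow>
     \<not> prefix_le p1 p2 \<and> \<not> prefix_le p2 p1 \<and> Rd1 \<inter> Wt2 = {} \<and> Rd2 \<inter> Wt1 = {})"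

fun diff :: "'r lab \<Rightarrow> 'r ann \<Rightarrow> 'r ann \<Rightarrow> 'r ann" where
  "diff (Fwd a) (V, ER, EW) (V', ER', EW') = (V' - V, ER' - ER, EW' - EW)"
| "diff (Bwd a) (V, ER, EW) (V', ER', EW') = (V - V', ER - ER', EW - EW')"

fun odot :: "'r lab \<Rightarrow> 'r ann \<Rightarrow> 'r ann \<Rightarrow> 'r ann" where
  "odot (Fwd a) (V, ER, EW) (dV, dER, dEW) = (V \<union> dV, ER \<union> dER, EW \<union> dEW)"
| "odot (Bwd a) (V, ER, EW) (dV, dER, dEW) = (V - dV, ER - dER, EW - dEW)"

end

theory Submission
  imports Defs "HOL-Library.Product_Order"
begin

(*
  A forward step with label (p, Rd, Wt) adds to A the fresh node v = (p, max_p p V + 1) and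
  edges into v from the last writer of each resource in Rd \<union> Wt; so the new annotation is
  A \<squnion> ann_delta A a, where ann_delta A a depends only on the p-nodes of A and on the
  r-labelled write chains for r in Rd \<union> Wt. If \<alpha> and \<beta> are independent, a \<beta>-step in either
  direction changes neither, so \<alpha> adds (or removes) the same node and edges before and after \<beta>.
  Well-formedness of the resulting annotation holds because extending an annotation DAG by a step
  and intersecting two sub-DAGs of a common annotation DAG both yield annotation DAGs.
  The last writer is well defined because in an annotation DAG the write edges of each
  resource form a finite acyclic functional graph in which every source other than the bottom
  node has a predecessor, hence a single path from the bottom node.
*)

(* Annotations are ordered componentwise (Product_Order), so \<squnion>, \<sqinter>, - and \<le> act on
   nodes, read edges and write edges simultaneously, matching odot and diff. *)
unbundle lattice_syntax

context boolean_algebra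
begin

lemma sup_diff_cancel_left: "x \<sqinter> y = \<bottom> \<Longrightarrow> (x \<squnion> y) - x = y"
  by (metis diff_eq inf_commute inf_compl_bot_right inf_shunt inf_sup_distrib2
      sup_bot.left_neutral inf_absorb1 compl_inf_bot)

lemma sup_diff_cancel_right: "x \<sqinter> y = \<bottom> \<Longrightarrow> (x \<squnion> y) - y = x"
  by (metis inf_commute sup_commute sup_diff_cancel_left)

lemma diff_sup_cancel: "x \<le> y \<Longrightarrow> (y - x) \<squnion> x = y"
  by (simp add: diff_eq sup_inf_distrib2 sup_absorb1)

lemma le_sup_disjoint: "x \<le> y \<squnion> z \<Longrightarrow> x \<sqinter> z = \<bottom> \<Longrightarrow> x \<le> y"
  by (metis inf_shunt shunt2 sup_commute inf_absorb1)

lemma diff_inf_absorb: "y \<le> z \<Longrightarrow> (z - x) \<sqinter> y = y - x"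
  by (metis diff_eq inf_absorb1 inf_assoc inf_commute)

end

definition path_edges :: "'a list \<Rightarrow> ('a \<times> 'a) set" where
  "path_edges vs = set (zip vs (tl vs))"

lemma path_edges_simps [simp]:
  "path_edges [] = {}"
  "path_edges [x] = {}"
  "path_edges (x # y # zs) = insert (x, y) (path_edges (y # zs))"
  by (simp_all add: path_edges_def)

lemma path_edges_subset: "path_edges vs \<subseteq> set vs \<times> set vs"
  unfolding path_edges_def by (cases vs) (auto dest: set_zip_leftD set_zip_rightD)

lemma path_edges_conv_nth: "path_edges vs = {(vs ! i, vs ! Suc i) | i. Suc i < length vs}"
  unfolding path_edges_def set_zip by (auto simp: nth_tl)

lemma path_edges_rtrancl_last: "x \<in> set vs \<Longrightarrow> (x, last vs) \<in> (path_edges vs)\<^sup>*"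
proof (induction vs arbitrary: x rule: induct_list012)
  case (3 u v ws)
  have mono: "(path_edges (v # ws))\<^sup>* \<subseteq> (path_edges (u # v # ws))\<^sup>*"
    by (rule rtrancl_mono) auto
  have v: "(v, last (u # v # ws)) \<in> (path_edges (u # v # ws))\<^sup>*"
    using "3.IH"(2)[of v] mono by auto
  show ?case
  proof (cases "x = u")
    case True
    have "(u, v) \<in> path_edges (u # v # ws)" by simp
    from this v show ?thesis unfolding True by (rule converse_rtrancl_into_rtrancl)
  next
    case False
    then have "x \<in> set (v # ws)" using "3.prems" by simp
    then show ?thesis using "3.IH"(2) mono by auto
  qed
qed simp_all

lemma path_edges_last_notin_Domain:
  assumes "acyclic (path_edges vs)" shows "last vs \<notin> Domain (path_edges vs)"
proof
  assume "last vs \<in> Domain (path_edges vs)"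
  then obtain y where y: "(last vs, y) \<in> path_edges vs" by blast
  then have "y \<in> set vs" using path_edges_subset by blast
  then have "(y, last vs) \<in> (path_edges vs)\<^sup>*" by (rule path_edges_rtrancl_last)
  with y have "(last vs, last vs) \<in> (path_edges vs)\<^sup>+" by simp
  with assms show False by (simp add: acyclic_def)
qed

lemma root_in_Domain:
  assumes "finite G" "acyclic G" "G \<noteq> {}" "\<And>u w. (u, w) \<in> G \<Longrightarrow> u \<noteq> z \<Longrightarrow> u \<in> Range G"
  shows "z \<in> Domain G"
proof -
  have "wf G" using assms(1,2) by (rule finite_acyclic_wf)
  moreover have "Domain G \<noteq> {}" using assms(3) by auto
  ultimately obtain m where "m \<in> Domain G" "\<And>y. (y, m) \<in> G \<Longrightarrow> y \<notin> Domain G"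
    by (metis ex_in_conv wfE_min)
  then show ?thesis using assms(4) by blast
qed

lemma path_edges_exists:
  assumes "finite G" "acyclic G" "single_valued G"
    and "\<And>u w. (u, w) \<in> G \<Longrightarrow> u \<noteq> z \<Longrightarrow> u \<in> Range G"
  shows "\<exists>vs. vs \<noteq> [] \<and> hd vs = z \<and> path_edges vs = G"
  using assms
proof (induction "card G" arbitrary: G z rule: less_induct)
  case less
  show ?case
  proof (cases "G = {}")
    case True
    then show ?thesis by (intro exI[of _ "[z]"]) simp
  next
    case False
    have "z \<in> Domain G" using less.prems(1,2) False less.prems(4) by (rule root_in_Domain)
    then obtain w where zw: "(z, w) \<in> G" by blast
    define G' where "G' = G - {(z, w)}"
    have sub: "G' \<subseteq> G" unfolding G'_def by blast
    have "card G' < card G" unfolding G'_def using less.prems(1) zw by (rule card_Diff1_less)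
    moreover have "finite G'" using finite_subset[OF sub less.prems(1)] .
    moreover have "acyclic G'" using acyclic_subset[OF less.prems(2) sub] .
    moreover have "single_valued G'" using single_valued_subset[OF sub less.prems(3)] .
    moreover have "u \<in> Range G'" if uy: "(u, y) \<in> G'" and uw: "u \<noteq> w" for u y
    proof -
      have "u \<noteq> z" using uy zw less.prems(3) unfolding G'_def by (auto dest: single_valuedD)
      then obtain x where "(x, u) \<in> G" using uy less.prems(4) unfolding G'_def by blast
      then show ?thesis using uw unfolding G'_def by blast
    qed
    ultimately obtain ws where ws: "ws \<noteq> []" "hd ws = w" "path_edges ws = G'"
      using less.hyps[of G' w] by blast
    then have "path_edges (z # ws) = insert (z, w) G'" by (cases ws) simp_all
    also have "\<dots> = G" unfolding G'_def using zw by blast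
    finally show ?thesis by (intro exI[of _ "z # ws"]) simp
  qed
qed

lemma single_valued_terminal_unique:
  assumes "single_valued G" "(z, x) \<in> G\<^sup>*" "(z, y) \<in> G\<^sup>*" "x \<notin> Domain G" "y \<notin> Domain G"
  shows "x = y"
  using single_valued_confluent[OF assms(1-3)] assms(4,5) by (metis DomainI converse_rtranclE)

definition wgraph :: "'r \<Rightarrow> 'r edges \<Rightarrow> (node \<times> node) set" where
  "wgraph r EW = {(u, w). (u, r, w) \<in> EW}"

lemma r_path_iff: "r_path r EW vs \<longleftrightarrow> vs \<noteq> [] \<and> hd vs = None \<and> path_edges vs = wgraph r EW"
proof -
  define f where "f = (\<lambda>(u :: node, w :: node). (u, r, w))"
  have "inj f" unfolding f_def inj_def by auto
  moreover have "{(vs ! i, r, vs ! Suc i) | i. Suc i < length vs} = f ` path_edges vs"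
    unfolding path_edges_conv_nth f_def by auto
  moreover have "{e \<in> EW. fst (snd e) = r} = f ` wgraph r EW"
    unfolding f_def wgraph_def by force
  ultimately show ?thesis unfolding r_path_def by (simp add: inj_image_eq_iff)
qed

lemma last_w_wgraph: "last_w r EW = (if wgraph r EW = {} then None
    else THE v. \<exists>vs. vs \<noteq> [] \<and> hd vs = None \<and> path_edges vs = wgraph r EW \<and> last vs = v)"
  unfolding last_w_def r_path_iff by (simp add: wgraph_def)

lemma last_w_cong: "wgraph r EW1 = wgraph r EW2 \<Longrightarrow> last_w r EW1 = last_w r EW2"
  unfolding last_w_wgraph by simp

lemma ann_dagD:
  assumes "ann_dag (V, ER, EW)"
  shows "finite V" "None \<in> V"
    "\<And>p n. Some (p, n) \<in> V \<Longrightarrow> pid_ok p"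
    "\<And>p n n'. Some (p, n) \<in> V \<Longrightarrow> n' \<le> n \<Longrightarrow> Some (p, n') \<in> V"
    "ER \<subseteq> V \<times> UNIV \<times> V" "EW \<subseteq> V \<times> UNIV \<times> V"
    "\<And>v' v'' r v. (v', r, v) \<in> ER \<union> EW \<Longrightarrow> (v'', r, v) \<in> ER \<union> EW \<Longrightarrow> v' = v''"
    "ER \<inter> EW = {}"
    "acyclic (edge_graph (ER \<union> EW))"
    "\<And>v' r v. (v', r, v) \<in> EW \<Longrightarrow> v' \<noteq> None \<Longrightarrow> \<exists>v''. (v'', r, v') \<in> EW"
    "\<And>v r v' v''. (v, r, v') \<in> EW \<Longrightarrow> (v, r, v'') \<in> EW \<Longrightarrow> v' = v''"
  using assms unfolding ann_dag_def by (simp_all, blast+)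

lemma ann_dagI:
  assumes "finite V" "None \<in> V"
    "\<And>p n. Some (p, n) \<in> V \<Longrightarrow> pid_ok p"
    "\<And>p n n'. Some (p, n) \<in> V \<Longrightarrow> n' \<le> n \<Longrightarrow> Some (p, n') \<in> V"
    "ER \<subseteq> V \<times> UNIV \<times> V" "EW \<subseteq> V \<times> UNIV \<times> V"
    "\<And>v' v'' r v. (v', r, v) \<in> ER \<union> EW \<Longrightarrow> (v'', r, v) \<in> ER \<union> EW \<Longrightarrow> v' = v''"
    "ER \<inter> EW = {}"
    "acyclic (edge_graph (ER \<union> EW))"
    "\<And>v' r v. (v', r, v) \<in> EW \<Longrightarrow> v' \<noteq> None \<Longrightarrow> \<exists>v''. (v'', r, v') \<in> EW"
    "\<And>v r v' v''. (v, r, v') \<in> EW \<Longrightarrow> (v, r, v'') \<in> EW \<Longrightarrow> v' = v''"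
  shows "ann_dag (V, ER, EW)"
  unfolding ann_dag_def case_prod_conv using assms by blast

lemma wgraph_ann_dag:
  assumes "ann_dag (V, ER, EW)"
  shows "finite (wgraph r EW)" "acyclic (wgraph r EW)" "single_valued (wgraph r EW)"
    "\<And>u w. (u, w) \<in> wgraph r EW \<Longrightarrow> u \<noteq> None \<Longrightarrow> u \<in> Range (wgraph r EW)"
proof -
  note D = ann_dagD[OF assms]
  have "wgraph r EW \<subseteq> V \<times> V" using D(6) unfolding wgraph_def by blast
  then show "finite (wgraph r EW)" using D(1) by (meson finite_SigmaI finite_subset)
  show "acyclic (wgraph r EW)"
    using D(9) by (rule acyclic_subset) (auto simp: wgraph_def edge_graph_def)
  show "single_valued (wgraph r EW)" using D(11) unfolding single_valued_def wgraph_def by blast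
  show "\<And>u w. (u, w) \<in> wgraph r EW \<Longrightarrow> u \<noteq> None \<Longrightarrow> u \<in> Range (wgraph r EW)"
    using D(10) unfolding wgraph_def by blast
qed

lemma last_w_reachable_terminal:
  assumes "ann_dag (V, ER, EW)"
  shows "(None, last_w r EW) \<in> (wgraph r EW)\<^sup>*" "last_w r EW \<notin> Domain (wgraph r EW)"
proof -
  let ?G = "wgraph r EW"
  note G = wgraph_ann_dag[OF assms, where r = r]
  have terminal: "(None, last ws) \<in> ?G\<^sup>* \<and> last ws \<notin> Domain ?G"
    if "ws \<noteq> []" "hd ws = None" "path_edges ws = ?G" for ws
    using path_edges_rtrancl_last[OF hd_in_set[OF that(1)]] path_edges_last_notin_Domain[of ws] G(2) that(2,3) by simp
  have "(None, last_w r EW) \<in> ?G\<^sup>* \<and> last_w r EW \<notin> Domain ?G"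
  proof (cases "?G = {}")
    case True
    then show ?thesis by (simp add: last_w_wgraph)
  next
    case False
    have "\<exists>vs. vs \<noteq> [] \<and> hd vs = None \<and> path_edges vs = ?G"
      using G by (rule path_edges_exists)
    then obtain vs where vs: "vs \<noteq> []" "hd vs = None" "path_edges vs = ?G" by blast
    have "(THE v. \<exists>ws. ws \<noteq> [] \<and> hd ws = None \<and> path_edges ws = ?G \<and> last ws = v) = last vs"
    proof (rule the_equality)
      show "\<exists>ws. ws \<noteq> [] \<and> hd ws = None \<and> path_edges ws = ?G \<and> last ws = last vs"
        using vs by blast
    next
      fix v assume "\<exists>ws. ws \<noteq> [] \<and> hd ws = None \<and> path_edges ws = ?G \<and> last ws = v"
      then obtain ws where "ws \<noteq> []" "hd ws = None" "path_edges ws = ?G" "last ws = v"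
        by blast
      then show "v = last vs"
        using terminal[OF vs] terminal[of ws] single_valued_terminal_unique[OF G(3)] by blast
    qed
    then have "last_w r EW = last vs" using False by (simp add: last_w_wgraph)
    then show ?thesis using terminal vs by simp
  qed
  then show "(None, last_w r EW) \<in> ?G\<^sup>*" "last_w r EW \<notin> Domain ?G" by blast+
qed

lemma last_w_in_Range:
  "ann_dag (V, ER, EW) \<Longrightarrow> last_w r EW \<noteq> None \<Longrightarrow> last_w r EW \<in> Range (wgraph r EW)"
  by (metis RangeI last_w_reachable_terminal(1) rtranclE)

lemma last_w_in_nodes:
  assumes "ann_dag (V, ER, EW)" shows "last_w r EW \<in> V"
proof (cases "last_w r EW = None")
  case True
  then show ?thesis using ann_dagD(2)[OF assms] by simp
next
  case False
  then obtain u where "(u, r, last_w r EW) \<in> EW"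
    using last_w_in_Range[OF assms] unfolding wgraph_def by blast
  then show ?thesis using ann_dagD(6)[OF assms] by blast
qed

definition newnode :: "pid \<Rightarrow> node set \<Rightarrow> node" where
  "newnode p V = Some (p, nat (max_p p V + 1))"

definition new_edges :: "'r edges \<Rightarrow> node \<Rightarrow> 'r set \<Rightarrow> 'r edges" where
  "new_edges EW v R = {newedge r EW v | r. r \<in> R}"

definition ann_delta :: "'r ann \<Rightarrow> 'r lab0 \<Rightarrow> 'r ann" where
  "ann_delta A a = (case A of (V, ER, EW) \<Rightarrow> case a of (p, Rd, Wt) \<Rightarrow>
     ({newnode p V}, new_edges EW (newnode p V) (Rd - Wt), new_edges EW (newnode p V) Wt))"

lemma ann_delta_simp:
  "ann_delta (V, ER, EW) (p, Rd, Wt) =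
     ({newnode p V}, new_edges EW (newnode p V) (Rd - Wt), new_edges EW (newnode p V) Wt)"
  by (simp add: ann_delta_def)

lemma mem_new_edges [simp]: "(u, r, w) \<in> new_edges EW v R \<longleftrightarrow> r \<in> R \<and> u = last_w r EW \<and> w = v"
  by (auto simp: new_edges_def newedge_def)

lemma ann_fwd_iff: "ann_fwd A a A' \<longleftrightarrow> ann_dag A \<and> ann_dag A' \<and> A' = A \<squnion> ann_delta A a"
  by (cases A, cases A', cases a)
    (simp add: ann_fwd_def ann_delta_def newnode_def new_edges_def Let_def insert_commute)

lemma odot_Fwd [simp]: "odot (Fwd a) B D = B \<squnion> D"
  and odot_Bwd [simp]: "odot (Bwd a) B D = B - D"
  and diff_Fwd [simp]: "diff (Fwd a) A A' = A' - A"
  and diff_Bwd [simp]: "diff (Bwd a) A A' = A - A'"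
  by (cases B, cases D, cases A, cases A', simp)+

lemma finite_pid_indices: "finite V \<Longrightarrow> finite {n. Some (p, n) \<in> V}"
  using finite_vimageI[of V "\<lambda>n. Some (p, n)"] by (simp add: inj_def vimage_def)

lemma newnode_notin:
  assumes "finite V" shows "newnode p V \<notin> V"
proof
  let ?N = "{n. Some (p, n) \<in> V}"
  assume "newnode p V \<in> V"
  then have N: "nat (max_p p V + 1) \<in> ?N" by (simp add: newnode_def)
  then have "nat (max_p p V + 1) \<le> Max ?N" using finite_pid_indices[OF assms] by simp
  moreover have "max_p p V = int (Max ?N)" using N unfolding max_p_def by auto
  ultimately show False by simp
qed

lemma newnode_cong:
  assumes "\<And>n. Some (p, n) \<in> V1 \<longleftrightarrow> Some (p, n) \<in> V2"
  shows "newnode p V1 = newnode p V2"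
  unfolding newnode_def max_p_def by (simp add: assms)

lemma newnode_below:
  assumes "finite V" "\<And>n n'. Some (p, n) \<in> V \<Longrightarrow> n' \<le> n \<Longrightarrow> Some (p, n') \<in> V"
    and "newnode p V = Some (p, k)" "n < k"
  shows "Some (p, n) \<in> V"
proof -
  have "\<exists>n. Some (p, n) \<in> V"
    using assms(3,4) unfolding newnode_def max_p_def by (auto split: if_splits)
  then have "Max {n. Some (p, n) \<in> V} \<in> {n. Some (p, n) \<in> V}"
    using finite_pid_indices[OF assms(1)] by (intro Max_in) auto
  moreover have "n \<le> Max {n. Some (p, n) \<in> V}"
    using assms(3,4) \<open>\<exists>n. Some (p, n) \<in> V\<close> unfolding newnode_def max_p_def by simp
  ultimately show ?thesis using assms(2) by blast
qed

lemma ann_delta_disjoint: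
  assumes "ann_dag A" shows "A \<sqinter> ann_delta A a = \<bottom>"
proof -
  obtain V ER EW p Rd Wt where A: "A = (V, ER, EW)" and a: "a = (p, Rd, Wt)"
    by (cases A, cases a) auto
  note D = ann_dagD[OF assms[unfolded A]]
  have "newnode p V \<notin> V" using D(1) by (rule newnode_notin)
  then show ?thesis using D(5,6) by (auto simp: A a ann_delta_simp bot_prod_def)
qed

lemma ann_delta_disjoint_pid:
  "p \<noteq> q \<Longrightarrow> ann_delta A (p, Rd, Wt) \<sqinter> ann_delta B (q, Rd', Wt') = \<bottom>"
  by (cases A, cases B) (auto simp: ann_delta_simp bot_prod_def newnode_def)

lemma new_edges_image: "new_edges EW v R = (\<lambda>r. (last_w r EW, r, v)) ` R"
  by (auto simp: new_edges_def newedge_def)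

lemma new_edges_cong:
  assumes "\<And>r. r \<in> R \<Longrightarrow> wgraph r EW1 = wgraph r EW2"
  shows "new_edges EW1 v R = new_edges EW2 v R"
  unfolding new_edges_image using assms last_w_cong by (metis (no_types, lifting) image_cong)

lemma ann_delta_cong:
  assumes "\<And>n. Some (p, n) \<in> V1 \<longleftrightarrow> Some (p, n) \<in> V2"
    and "\<And>r. r \<in> Rd \<union> Wt \<Longrightarrow> wgraph r EW1 = wgraph r EW2"
  shows "ann_delta (V1, ER1, EW1) (p, Rd, Wt) = ann_delta (V2, ER2, EW2) (p, Rd, Wt)"
proof -
  have "new_edges EW1 v (Rd - Wt) = new_edges EW2 v (Rd - Wt)" for v
    using assms(2) by (intro new_edges_cong) blast
  moreover have "new_edges EW1 v Wt = new_edges EW2 v Wt" for v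
    using assms(2) by (intro new_edges_cong) blast
  ultimately show ?thesis using newnode_cong[OF assms(1)] by (simp add: ann_delta_simp)
qed

lemma ann_delta_inf:
  assumes "q \<noteq> p" "(Rd \<union> Wt) \<inter> Wt' = {}" "A' \<le> B \<squnion> ann_delta B (q, Rd', Wt')"
  shows "ann_delta (A' \<sqinter> B) (p, Rd, Wt) = ann_delta A' (p, Rd, Wt)"
proof -
  obtain V1 ER1 EW1 V2 ER2 EW2 where A': "A' = (V1, ER1, EW1)" and B: "B = (V2, ER2, EW2)"
    by (cases A', cases B) auto
  have V: "V1 \<subseteq> insert (newnode q V2) V2" and EW: "EW1 \<subseteq> EW2 \<union> new_edges EW2 (newnode q V2) Wt'"
    using assms(3) by (auto simp: A' B ann_delta_simp)
  have "Some (p, n) \<in> V1 \<inter> V2 \<longleftrightarrow> Some (p, n) \<in> V1" for n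
    using V assms(1) by (auto simp: newnode_def)
  moreover have "wgraph r (EW1 \<inter> EW2) = wgraph r EW1" if "r \<in> Rd \<union> Wt" for r
  proof -
    have "r \<notin> Wt'" using that assms(2) by blast
    then have "(u, r, w) \<in> EW2" if "(u, r, w) \<in> EW1" for u w using EW that by auto
    then show ?thesis by (auto simp: wgraph_def)
  qed
  ultimately show ?thesis unfolding A' B inf_Pair_Pair by (rule ann_delta_cong)
qed

lemma ann_delta_sup_delta:
  assumes "q \<noteq> p" "(Rd \<union> Wt) \<inter> Wt' = {}"
  shows "ann_delta (B \<squnion> ann_delta B (q, Rd', Wt')) (p, Rd, Wt) = ann_delta B (p, Rd, Wt)"
proof -
  have absorb: "(B \<squnion> ann_delta B (q, Rd', Wt')) \<sqinter> B = B" by (rule inf_absorb2) (rule sup_ge1)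
  have "ann_delta ((B \<squnion> ann_delta B (q, Rd', Wt')) \<sqinter> B) (p, Rd, Wt)
      = ann_delta (B \<squnion> ann_delta B (q, Rd', Wt')) (p, Rd, Wt)"
    by (rule ann_delta_inf[OF assms order_refl])
  then show ?thesis unfolding absorb by (rule sym)
qed

lemma acyclic_insert_sink:
  assumes "acyclic R" "S \<subseteq> UNIV \<times> {x}" "x \<notin> Domain (R \<union> S)"
  shows "acyclic (R \<union> S)"
proof -
  have "(a, b) \<in> R\<^sup>+" if "(a, b) \<in> (R \<union> S)\<^sup>+" "b \<noteq> x" for a b
    using that
  proof (induction rule: trancl_induct)
    case (base b)
    then show ?case using assms(2) by auto
  next
    case (step b c)
    moreover have "b \<noteq> x" using step.hyps(2) assms(3) by blast
    ultimately show ?case using assms(2) by (auto intro: trancl_into_trancl)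
  qed
  moreover have "(x, x) \<notin> (R \<union> S)\<^sup>+" using assms(3) by (auto dest: tranclD)
  ultimately show ?thesis using assms(1) unfolding acyclic_def by blast
qed

lemma edge_graph_Un: "edge_graph (E \<union> F) = edge_graph E \<union> edge_graph F"
  unfolding edge_graph_def by auto

lemma ann_dag_inf:
  assumes "ann_dag A" "ann_dag A1" "ann_dag A2" "A1 \<le> A" "A2 \<le> A"
  shows "ann_dag (A1 \<sqinter> A2)"
proof -
  obtain V ER EW V1 ER1 EW1 V2 ER2 EW2
    where A: "A = (V, ER, EW)" and A1: "A1 = (V1, ER1, EW1)" and A2: "A2 = (V2, ER2, EW2)"
    by (cases A, cases A1, cases A2) auto
  note D = ann_dagD[OF assms(1)[unfolded A]]
  note D1 = ann_dagD[OF assms(2)[unfolded A1]]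
  note D2 = ann_dagD[OF assms(3)[unfolded A2]]
  have sub: "ER1 \<subseteq> ER" "EW1 \<subseteq> EW" "EW2 \<subseteq> EW" using assms(4,5) by (simp_all add: A A1 A2)
  have pred: "\<exists>u. (u, r, v) \<in> EW1 \<inter> EW2" if edge: "(v, r, w) \<in> EW1 \<inter> EW2" and v: "v \<noteq> None" for v r w
  proof -
    obtain u1 u2 where "(u1, r, v) \<in> EW1" "(u2, r, v) \<in> EW2"
      using D1(10) D2(10) edge v by blast
    moreover then have "u1 = u2" using D(7) sub by blast
    ultimately show ?thesis by blast
  qed
  show ?thesis unfolding A1 A2 inf_Pair_Pair
  proof (rule ann_dagI)
    show "acyclic (edge_graph (ER1 \<inter> ER2 \<union> EW1 \<inter> EW2))"
      using D1(9) by (rule acyclic_subset) (auto simp: edge_graph_def)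
    show "ER1 \<inter> ER2 \<subseteq> (V1 \<inter> V2) \<times> UNIV \<times> (V1 \<inter> V2)"
      using D1(5) D2(5) by blast
    show "EW1 \<inter> EW2 \<subseteq> (V1 \<inter> V2) \<times> UNIV \<times> (V1 \<inter> V2)"
      using D1(6) D2(6) by blast
    show "\<And>p n n'. Some (p, n) \<in> V1 \<inter> V2 \<Longrightarrow> n' \<le> n \<Longrightarrow> Some (p, n') \<in> V1 \<inter> V2"
      using D1(4) D2(4) by blast
    show "\<And>v' v'' r v. (v', r, v) \<in> ER1 \<inter> ER2 \<union> EW1 \<inter> EW2 \<Longrightarrow>
        (v'', r, v) \<in> ER1 \<inter> ER2 \<union> EW1 \<inter> EW2 \<Longrightarrow> v' = v''"
      using D1(7) by blast
    show "\<And>v r v' v''. (v, r, v') \<in> EW1 \<inter> EW2 \<Longrightarrow> (v, r, v'') \<in> EW1 \<inter> EW2 \<Longrightarrow> v' = v''"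
      using D1(11) by blast
  qed (use D1(1,2,3,8) D2(2) pred in auto)
qed

lemma insert_newnode_downclosed:
  assumes "finite V" "\<And>p n n'. Some (p, n) \<in> V \<Longrightarrow> n' \<le> n \<Longrightarrow> Some (p, n') \<in> V"
    and "Some (q, n) \<in> insert (newnode p V) V" "n' \<le> n"
  shows "Some (q, n') \<in> insert (newnode p V) V"
proof (cases "Some (q, n) \<in> V")
  case True
  then show ?thesis using assms(2,4) by blast
next
  case False
  then have new: "newnode p V = Some (q, n)" using assms(3) by simp
  then have "q = p" by (simp add: newnode_def)
  show ?thesis
  proof (cases "n' = n")
    case False
    then have "n' < n" using assms(4) by simp
    have "newnode p V = Some (p, n)" using new \<open>q = p\<close> by simp
    from newnode_below[OF assms(1,2) this \<open>n' < n\<close>] show ?thesis using \<open>q = p\<close> by simp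
  qed (use new in simp)
qed

lemma write_edges_sup_new_edges_pred:
  assumes "ann_dag (V, ER, EW)" "(a, r, b) \<in> EW \<union> new_edges EW v W" "a \<noteq> None"
  shows "\<exists>c. (c, r, a) \<in> EW \<union> new_edges EW v W"
proof (cases "(a, r, b) \<in> EW")
  case True
  then show ?thesis using ann_dagD(10)[OF assms(1)] assms(3) by blast
next
  case False
  then have "a = last_w r EW" using assms(2) by simp
  then show ?thesis using last_w_in_Range[OF assms(1)] assms(3) unfolding wgraph_def by blast
qed

lemma write_edges_sup_new_edges_functional:
  assumes "ann_dag (V, ER, EW)" "(a, r, b) \<in> EW \<union> new_edges EW v W" "(a, r, c) \<in> EW \<union> new_edges EW v W"
  shows "b = c"
proof -
  have "(last_w r EW, r, y) \<notin> EW" for y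
    using last_w_reachable_terminal(2)[OF assms(1), of r] unfolding wgraph_def by blast
  then show ?thesis using assms(2,3) ann_dagD(11)[OF assms(1)] by auto
qed

lemma acyclic_sup_new_edges:
  assumes "ann_dag (V, ER, EW)" "v \<notin> V"
  shows "acyclic (edge_graph (ER \<union> new_edges EW v R \<union> (EW \<union> new_edges EW v W)))"
proof -
  let ?new = "edge_graph (new_edges EW v R \<union> new_edges EW v W)"
  note D = ann_dagD[OF assms(1)]
  have "?new \<subseteq> UNIV \<times> {v}" by (auto simp: edge_graph_def)
  moreover have "Domain (edge_graph (ER \<union> EW) \<union> ?new) \<subseteq> V"
    using D(5,6) last_w_in_nodes[OF assms(1)] by (auto simp: edge_graph_def)
  ultimately have "acyclic (edge_graph (ER \<union> EW) \<union> ?new)"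
    using D(9) assms(2) by (intro acyclic_insert_sink) auto
  then show ?thesis by (simp add: edge_graph_Un Un_ac)
qed

lemma ann_dag_sup_delta:
  assumes "ann_dag A" "pid_ok p"
  shows "ann_dag (A \<squnion> ann_delta A (p, Rd, Wt))"
proof -
  obtain V ER EW where A: "A = (V, ER, EW)" by (cases A) auto
  have dag: "ann_dag (V, ER, EW)" using assms(1) by (simp add: A)
  note D = ann_dagD[OF dag]
  define v where "v = newnode p V"
  define NR where "NR = new_edges EW v (Rd - Wt)"
  define NW where "NW = new_edges EW v Wt"
  have vV: "v \<notin> V" unfolding v_def using D(1) by (rule newnode_notin)
  have lastV: "last_w r EW \<in> V" for r using dag by (rule last_w_in_nodes)
  have new: "(u, r, w) \<in> NR \<union> NW \<longleftrightarrow> r \<in> Rd \<union> Wt \<and> u = last_w r EW \<and> w = v" for u r w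
    unfolding NR_def NW_def by auto
  have old: "a \<in> V \<and> b \<in> V" if "(a, r, b) \<in> ER \<union> EW" for a r b using that D(5,6) by blast
  have "A \<squnion> ann_delta A (p, Rd, Wt) = (insert v V, ER \<union> NR, EW \<union> NW)"
    by (simp add: A ann_delta_simp v_def NR_def NW_def)
  moreover have "ann_dag (insert v V, ER \<union> NR, EW \<union> NW)"
  proof (rule ann_dagI)
    show "\<And>q n n'. Some (q, n) \<in> insert v V \<Longrightarrow> n' \<le> n \<Longrightarrow> Some (q, n') \<in> insert v V"
      unfolding v_def using D(1,4) by (rule insert_newnode_downclosed)
    show "\<And>q n. Some (q, n) \<in> insert v V \<Longrightarrow> pid_ok q"
      using D(3) assms(2) by (auto simp: v_def newnode_def)
    show "ER \<union> NR \<subseteq> insert v V \<times> UNIV \<times> insert v V"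
      using D(5) lastV by (auto simp: NR_def)
    show "EW \<union> NW \<subseteq> insert v V \<times> UNIV \<times> insert v V"
      using D(6) lastV by (auto simp: NW_def)
    show "\<And>a b r w. (a, r, w) \<in> ER \<union> NR \<union> (EW \<union> NW) \<Longrightarrow> (b, r, w) \<in> ER \<union> NR \<union> (EW \<union> NW) \<Longrightarrow> a = b"
      using D(7) new old vV by (metis Un_iff)
    show "(ER \<union> NR) \<inter> (EW \<union> NW) = {}"
      using D(5,6,8) vV by (auto simp: NR_def NW_def)
    show "acyclic (edge_graph (ER \<union> NR \<union> (EW \<union> NW)))"
      unfolding NR_def NW_def using dag vV by (rule acyclic_sup_new_edges)
    show "\<exists>c. (c, r, a) \<in> EW \<union> NW" if "(a, r, b) \<in> EW \<union> NW" "a \<noteq> None" for a r b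
      using write_edges_sup_new_edges_pred[OF dag] that unfolding NW_def by blast
    show "b = c" if "(a, r, b) \<in> EW \<union> NW" "(a, r, c) \<in> EW \<union> NW" for a r b c
      using write_edges_sup_new_edges_functional[OF dag] that unfolding NW_def by blast
  qed (use D(1,2) in simp_all)
  ultimately show ?thesis by simp
qed

lemma ann_dag_pid_ok: "ann_dag (A \<squnion> ann_delta A (p, Rd, Wt)) \<Longrightarrow> pid_ok p"
  by (cases A) (auto simp: ann_delta_simp newnode_def dest: ann_dagD(3))

lemma sup_ann_delta_diff: "ann_dag A \<Longrightarrow> (A \<squnion> ann_delta A a) - A = ann_delta A a"
  by (rule sup_diff_cancel_left) (rule ann_delta_disjoint)

lemma ann_fwd_commute:
  assumes "ann_fwd A (p, Rd, Wt) A'" and "ann_fwd A (q, Rd', Wt') A'' \<or> ann_fwd A'' (q, Rd', Wt') A"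
    and "q \<noteq> p" "(Rd \<union> Wt) \<inter> Wt' = {}"
  shows "ann_fwd A'' (p, Rd, Wt) (A'' \<squnion> (A' - A))"
proof -
  have dag: "ann_dag A" "ann_dag A'" and A': "A' = A \<squnion> ann_delta A (p, Rd, Wt)"
    using assms(1) unfolding ann_fwd_iff by blast+
  have dag'': "ann_dag A''" using assms(2) by (auto simp: ann_fwd_iff)
  from assms(2) consider
      "A'' = A \<squnion> ann_delta A (q, Rd', Wt')" | "A = A'' \<squnion> ann_delta A'' (q, Rd', Wt')"
    unfolding ann_fwd_iff by blast
  then have "ann_delta A'' (p, Rd, Wt) = ann_delta A (p, Rd, Wt)"
    by cases (simp_all add: ann_delta_sup_delta[OF assms(3,4)])
  moreover have "A' - A = ann_delta A (p, Rd, Wt)" unfolding A' using dag(1) by (rule sup_ann_delta_diff)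
  moreover have "ann_dag (A'' \<squnion> ann_delta A'' (p, Rd, Wt))"
    using dag'' ann_dag_pid_ok[OF dag(2)[unfolded A']] by (rule ann_dag_sup_delta)
  ultimately show ?thesis using dag'' by (simp add: ann_fwd_iff)
qed

lemma ann_bwd_commute_fwd:
  assumes "ann_fwd A' (p, Rd, Wt) A" and "ann_fwd A (q, Rd', Wt') A''"
    and "q \<noteq> p" "(Rd \<union> Wt) \<inter> Wt' = {}" "(Rd' \<union> Wt') \<inter> Wt = {}"
  shows "ann_fwd (A'' - (A - A')) (p, Rd, Wt) A''"
proof -
  let ?a = "ann_delta A' (p, Rd, Wt)" and ?b = "ann_delta A' (q, Rd', Wt')"
  have dag': "ann_dag A'" and A: "A = A' \<squnion> ?a"
    using assms(1) unfolding ann_fwd_iff by blast+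
  have dag'': "ann_dag A''" and A''_step: "A'' = A \<squnion> ann_delta A (q, Rd', Wt')"
    using assms(2) unfolding ann_fwd_iff by blast+
  then have A'': "A'' = (A' \<squnion> ?b) \<squnion> ?a"
    unfolding A using ann_delta_sup_delta[OF assms(3)[symmetric] assms(5)] by (simp add: ac_simps)
  have "(A' \<squnion> ?b) \<sqinter> ?a = \<bottom>"
    using ann_delta_disjoint[OF dag'] ann_delta_disjoint_pid[OF assms(3)]
    by (simp add: inf_sup_distrib2)
  then have "A'' - (A - A') = A' \<squnion> ?b"
    unfolding A'' A sup_ann_delta_diff[OF dag'] by (rule sup_diff_cancel_right)
  moreover have "ann_dag (A' \<squnion> ?b)"
    using dag' ann_dag_pid_ok[OF dag''[unfolded A''_step]] by (rule ann_dag_sup_delta)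
  moreover have "ann_delta (A' \<squnion> ?b) (p, Rd, Wt) = ?a"
    using ann_delta_sup_delta[OF assms(3,4)] .
  ultimately show ?thesis using dag'' A'' by (simp add: ann_fwd_iff)
qed

lemma ann_bwd_commute_bwd:
  assumes "ann_fwd A' (p, Rd, Wt) A" and "ann_fwd A'' (q, Rd', Wt') A"
    and "q \<noteq> p" "(Rd \<union> Wt) \<inter> Wt' = {}"
  shows "ann_fwd (A'' - (A - A')) (p, Rd, Wt) A''"
proof -
  let ?a = "ann_delta A' (p, Rd, Wt)" and ?b = "ann_delta A'' (q, Rd', Wt')"
  \<comment> \<open>The common predecessor of A' and A'' is their meet.\<close>
  have dag': "ann_dag A'" and dag: "ann_dag A" and A: "A = A' \<squnion> ?a"
    using assms(1) unfolding ann_fwd_iff by blast+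
  have dag'': "ann_dag A''" and A_b: "A = A'' \<squnion> ?b"
    using assms(2) unfolding ann_fwd_iff by blast+
  have le: "A' \<le> A" "A'' \<le> A" by (subst A, rule sup_ge1) (subst A_b, rule sup_ge1)
  have AA': "A - A' = ?a" unfolding A by (rule sup_ann_delta_diff[OF dag'])
  have "A' = A - ?a" unfolding A using ann_delta_disjoint[OF dag'] by (rule sup_diff_cancel_right[symmetric])
  then have "A' \<sqinter> A'' = (A - ?a) \<sqinter> A''" by (rule arg_cong)
  also have "\<dots> = A'' - ?a" using le(2) by (rule diff_inf_absorb)
  finally have X: "A'' - (A - A') = A' \<sqinter> A''" unfolding AA' by (rule sym)
  have "ann_dag (A' \<sqinter> A'')"
    using dag dag' dag'' le by (rule ann_dag_inf)
  moreover have "ann_delta (A' \<sqinter> A'') (p, Rd, Wt) = ?a"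
    using assms(3,4) le(1) unfolding A_b by (rule ann_delta_inf)
  moreover have "?a \<le> A''"
  proof (rule le_sup_disjoint)
    show "?a \<le> A'' \<squnion> ?b" unfolding A_b[symmetric] A by simp
    show "?a \<sqinter> ?b = \<bottom>" using assms(3) by (intro ann_delta_disjoint_pid) simp
  qed
  then have "A'' = (A' \<sqinter> A'') \<squnion> ?a"
    unfolding X[symmetric] AA' by (rule diff_sup_cancel[symmetric])
  ultimately show ?thesis unfolding X ann_fwd_iff using dag'' by simp
qed

theorem mainTheorem5:
  fixes \<alpha> \<beta> :: "'r lab" and A A' A'' :: "'r ann"
  assumes "und \<alpha> = (p\<^sub>\<alpha>, Rd\<^sub>\<alpha>, Wt\<^sub>\<alpha>)" and "und \<beta> = (p\<^sub>\<beta>, Rd\<^sub>\<beta>, Wt\<^sub>\<beta>)"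
    and "Wt\<^sub>\<alpha> \<subseteq> Rd\<^sub>\<alpha>" and "Wt\<^sub>\<beta> \<subseteq> Rd\<^sub>\<beta>"
    and "iota_lab \<alpha> \<beta>"
    and "ann_step A \<alpha> A'" and "ann_step A \<beta> A''"
  shows "ann_step A'' \<alpha> (odot \<alpha> A'' (diff \<alpha> A A'))"
proof -
  have indep: "\<not> prefix_le p\<^sub>\<alpha> p\<^sub>\<beta>" "Rd\<^sub>\<alpha> \<inter> Wt\<^sub>\<beta> = {}" "Rd\<^sub>\<beta> \<inter> Wt\<^sub>\<alpha> = {}"
    using assms(5) unfolding iota_lab_def assms(1,2) by simp_all
  then have ne: "p\<^sub>\<beta> \<noteq> p\<^sub>\<alpha>" by (auto simp: prefix_le_def)
  have frame: "(Rd\<^sub>\<alpha> \<union> Wt\<^sub>\<alpha>) \<inter> Wt\<^sub>\<beta> = {}" "(Rd\<^sub>\<beta> \<union> Wt\<^sub>\<beta>) \<inter> Wt\<^sub>\<alpha> = {}"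
    using indep(2,3) assms(3,4) by blast+
  show ?thesis
  proof (cases \<alpha>)
    case (Fwd a)
    have "ann_fwd A (p\<^sub>\<beta>, Rd\<^sub>\<beta>, Wt\<^sub>\<beta>) A'' \<or> ann_fwd A'' (p\<^sub>\<beta>, Rd\<^sub>\<beta>, Wt\<^sub>\<beta>) A"
      using assms(2,7) by (cases \<beta>) simp_all
    with Fwd assms(1,6) show ?thesis using ann_fwd_commute[OF _ _ ne frame(1)] by simp
  next
    case (Bwd a)
    then have a: "a = (p\<^sub>\<alpha>, Rd\<^sub>\<alpha>, Wt\<^sub>\<alpha>)" using assms(1) by simp
    with Bwd have \<alpha>: "ann_fwd A' a A" using assms(6) by simp
    show ?thesis
    proof (cases \<beta>)
      case (Fwd b)
      then show ?thesis using Bwd a assms(2,7) ann_bwd_commute_fwd[OF \<alpha>[unfolded a] _ ne frame] by simp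
    next
      case (Bwd b)
      then show ?thesis
        using \<open>\<alpha> = Bwd a\<close> a assms(2,7) ann_bwd_commute_bwd[OF \<alpha>[unfolded a] _ ne frame(1)] by simp
    qed
  qed
qed

end
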